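(* Let $F$ be a proof-irrelevant family of setoids over a setoid $I$. Then the categories $\mathcal S(I,F)$ and $\mathcal C(I,F)$ are isomorphic. Specifically, the map $M:\mathcal C(I,F)\to\mathcal S(I,F)$, identity on objects and $M(i,j,f)=(i,j,\mathcal G_f)$ on arrows, is a well-defined functor, the map $N:\mathcal S(I,F)\to\mathcal C(I,F)$, identity on objects and $N(i,j,R)=(i,j,f)$ with $f:F(i)\to F(j)$ the unique extensional function such that $\mathcal G_f$ and $R$ have the same extension, is a well-defined functor, and $M\circ N$ and $N\circ M$ are the identity functors.
   Context: Setoids are types with equivalence relations; extensional functions respect them; $=_{\rm ext}$ is pointwise equality. A proof-irrelevant family $F$ over a setoid $I$: setoids $F(x)$ ($x\in I$) and extensional transports $F(p):F(x)\to F(y)$ for $p:x=_Iy$, with (F1) $F(\mathrm{refl}(x))=_{\rm ext}\mathrm{id}$, (F2) $F(p)=_{\rm ext}F(q)$ for all $p,q:x=_Iy$, (F3) $F(q)\circ F(p)=_{\rm ext}F(q\circ p)$. $S=\Sigma(I,F)$: pairs $(x,y)$, $y\in F(x)$, with $(x,y)\sim(x',y')$ iff $\exists p:x=_Ix'$, $F(p)(y)=_{F(x')}y'$; $\check F(i)=\{u\in S:(\exists x\in F(i))\,u=_S(i,x)\}$. Graph of extensional $f:F(i)\to F(j)$: $(u,v)\,\dot\in\,\mathcal G_f$ iff $(\exists x\in F(i))[u=_S(i,x)\wedge v=_S(j,f(x))]$. The category $\mathcal C(I,F)$: objects form the setoid $I$; arrows are triples $(i,j,f)$ with $i,j\in I$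 and $f:F(i)\to F(j)$ extensional, with $(i,j,f)\sim(i',j',f')$ iff there are $p:i=_Ii'$, $q:j=_Ij'$ with $F(q)\circ f=_{\rm ext}f'\circ F(p)$; domain $i$, codomain $j$; $(i,j,f)$ and $(j',k,g)$ are composable when there is $p:j=_Ij'$, with composite $(i,k,g\circ F(p)\circ f)$; identity on $i$ is $(i,i,\mathrm{id}_{F(i)})$. The category $\mathcal S(I,F)$: objects form the setoid $I$; arrows are triples $(i,j,R)$ with $R$ a functional binary relation on $S$ (extensional predicate on $S\times S$ with $(u,v),(u,v')\,\dot\in\,R\Rightarrow v=_Sv'$) whose domain equals $\check F(i)$ and whose range is included in $\check F(j)$; $(i,j,R)=(i',j',R')$ iff $i=_Ii'$, $j=_Ij'$ and $R,R'$ have the same extension; domain $i$, codomain $j$; composite of $(i,j,R)$ and $(j',k,Q)$ with $j=_Ij'$ is $(i,k,Q\circ R)$ (relational composition); identity on $i$ is $(i,i,I_{\check F(i)})$ where $I_{\check F(i)}$ is the identity relation on $\check F(i)$. *)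

theory Defs
  imports Main
begin

definition setoid_on :: "'a set \<Rightarrow> ('a \<Rightarrow> 'a \<Rightarrow> bool) \<Rightarrow> bool" where
  "setoid_on A eq \<longleftrightarrow>
     (\<forall>x\<in>A. eq x x) \<and>
     (\<forall>x\<in>A. \<forall>y\<in>A. eq x y \<longrightarrow> eq y x) \<and>
     (\<forall>x\<in>A. \<forall>y\<in>A. \<forall>z\<in>A. eq x y \<and> eq y z \<longrightarrow> eq x z)"

definition ext_fun ::
  "'a set \<Rightarrow> ('a \<Rightarrow> 'a \<Rightarrow> bool) \<Rightarrow> 'b set \<Rightarrow> ('b \<Rightarrow> 'b \<Rightarrow> bool) \<Rightarrow> ('a \<Rightarrow> 'b) \<Rightarrow> bool" where
  "ext_fun A eqA B eqB f \<longleftrightarrow>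
     (\<forall>x\<in>A. f x \<in> B) \<and> (\<forall>x\<in>A. \<forall>y\<in>A. eqA x y \<longrightarrow> eqB (f x) (f y))"

definition ext_eq :: "'a set \<Rightarrow> ('b \<Rightarrow> 'b \<Rightarrow> bool) \<Rightarrow> ('a \<Rightarrow> 'b) \<Rightarrow> ('a \<Rightarrow> 'b) \<Rightarrow> bool" where
  "ext_eq A eqB f g \<longleftrightarrow> (\<forall>x\<in>A. eqB (f x) (g x))"

text \<open>The index setoid I has carrier Ic; the proofs of x =_I y form the set Ip x y
(proof-relevant equality, as in the type-theoretic setting).  Irefl, Isym, Itrans are the
reflexivity, symmetry and transitivity proof terms; Itrans q p is q o p.
Fc x and Feq x give the setoid F(x); Ftr p is the transport F(p).\<close>

record ('i, 'p, 'a) family =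
  Ic :: "'i set"
  Ip :: "'i \<Rightarrow> 'i \<Rightarrow> 'p set"
  Irefl :: "'i \<Rightarrow> 'p"
  Isym :: "'p \<Rightarrow> 'p"
  Itrans :: "'p \<Rightarrow> 'p \<Rightarrow> 'p"
  Fc :: "'i \<Rightarrow> 'a set"
  Feq :: "'i \<Rightarrow> 'a \<Rightarrow> 'a \<Rightarrow> bool"
  Ftr :: "'p \<Rightarrow> 'a \<Rightarrow> 'a"

definition Ieq :: "('i, 'p, 'a) family \<Rightarrow> 'i \<Rightarrow> 'i \<Rightarrow> bool" where
  "Ieq \<Phi> x y \<longleftrightarrow> Ip \<Phi> x y \<noteq> {}"

definition pi_family :: "('i, 'p, 'a) family \<Rightarrow> bool" where
  "pi_family \<Phi> \<longleftrightarrow>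
     \<comment> \<open>I is a setoid (with proof terms)\<close>
     (\<forall>x\<in>Ic \<Phi>. Irefl \<Phi> x \<in> Ip \<Phi> x x) \<and>
     (\<forall>x\<in>Ic \<Phi>. \<forall>y\<in>Ic \<Phi>. \<forall>p\<in>Ip \<Phi> x y. Isym \<Phi> p \<in> Ip \<Phi> y x) \<and>
     (\<forall>x\<in>Ic \<Phi>. \<forall>y\<in>Ic \<Phi>. \<forall>z\<in>Ic \<Phi>. \<forall>p\<in>Ip \<Phi> x y. \<forall>q\<in>Ip \<Phi> y z.
        Itrans \<Phi> q p \<in> Ip \<Phi> x z) \<and>
     \<comment> \<open>each F(x) is a setoid\<close>
     (\<forall>x\<in>Ic \<Phi>. setoid_on (Fc \<Phi> x) (Feq \<Phi> x)) \<and>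
     \<comment> \<open>transports are extensional functions F(x) -> F(y)\<close>
     (\<forall>x\<in>Ic \<Phi>. \<forall>y\<in>Ic \<Phi>. \<forall>p\<in>Ip \<Phi> x y.
        ext_fun (Fc \<Phi> x) (Feq \<Phi> x) (Fc \<Phi> y) (Feq \<Phi> y) (Ftr \<Phi> p)) \<and>
     \<comment> \<open>(F1)\<close>
     (\<forall>x\<in>Ic \<Phi>. ext_eq (Fc \<Phi> x) (Feq \<Phi> x) (Ftr \<Phi> (Irefl \<Phi> x)) id) \<and>
     \<comment> \<open>(F2)\<close>
     (\<forall>x\<in>Ic \<Phi>. \<forall>y\<in>Ic \<Phi>. \<forall>p\<in>Ip \<Phi> x y. \<forall>q\<in>Ip \<Phi> x y.
        ext_eq (Fc \<Phi> x) (Feq \<Phi> y) (Ftr \<Phi> p) (Ftr \<Phi> q)) \<and>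
     \<comment> \<open>(F3)\<close>
     (\<forall>x\<in>Ic \<Phi>. \<forall>y\<in>Ic \<Phi>. \<forall>z\<in>Ic \<Phi>. \<forall>p\<in>Ip \<Phi> x y. \<forall>q\<in>Ip \<Phi> y z.
        ext_eq (Fc \<Phi> x) (Feq \<Phi> z) (Ftr \<Phi> q \<circ> Ftr \<Phi> p) (Ftr \<Phi> (Itrans \<Phi> q p)))"

definition Scar :: "('i, 'p, 'a) family \<Rightarrow> ('i \<times> 'a) set" where
  "Scar \<Phi> = {(x, y). x \<in> Ic \<Phi> \<and> y \<in> Fc \<Phi> x}"

definition Seq :: "('i, 'p, 'a) family \<Rightarrow> 'i \<times> 'a \<Rightarrow> 'i \<times> 'a \<Rightarrow> bool" where
  "Seq \<Phi> u u' \<longleftrightarrow>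
     (\<exists>p\<in>Ip \<Phi> (fst u) (fst u'). Feq \<Phi> (fst u') (Ftr \<Phi> p (snd u)) (snd u'))"

definition Fcheck :: "('i, 'p, 'a) family \<Rightarrow> 'i \<Rightarrow> ('i \<times> 'a) set" where
  "Fcheck \<Phi> i = {u \<in> Scar \<Phi>. \<exists>x\<in>Fc \<Phi> i. Seq \<Phi> u (i, x)}"

definition graph ::
  "('i, 'p, 'a) family \<Rightarrow> 'i \<Rightarrow> 'i \<Rightarrow> ('a \<Rightarrow> 'a) \<Rightarrow> 'i \<times> 'a \<Rightarrow> 'i \<times> 'a \<Rightarrow> bool" where
  "graph \<Phi> i j f u v \<longleftrightarrow> (\<exists>x\<in>Fc \<Phi> i. Seq \<Phi> u (i, x) \<and> Seq \<Phi> v (j, f x))"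

text \<open>Binary relations on S are predicates on S x S; only their values on S x S matter.\<close>

definition same_ext ::
  "('i, 'p, 'a) family \<Rightarrow> ('i \<times> 'a \<Rightarrow> 'i \<times> 'a \<Rightarrow> bool) \<Rightarrow> ('i \<times> 'a \<Rightarrow> 'i \<times> 'a \<Rightarrow> bool) \<Rightarrow> bool" where
  "same_ext \<Phi> R R' \<longleftrightarrow> (\<forall>u\<in>Scar \<Phi>. \<forall>v\<in>Scar \<Phi>. R u v \<longleftrightarrow> R' u v)"

definition rel_dom :: "('i, 'p, 'a) family \<Rightarrow> ('i \<times> 'a \<Rightarrow> 'i \<times> 'a \<Rightarrow> bool) \<Rightarrow> ('i \<times> 'a) set" where
  "rel_dom \<Phi> R = {u \<in> Scar \<Phi>. \<exists>v\<in>Scar \<Phi>. R u v}"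

definition rel_range :: "('i, 'p, 'a) family \<Rightarrow> ('i \<times> 'a \<Rightarrow> 'i \<times> 'a \<Rightarrow> bool) \<Rightarrow> ('i \<times> 'a) set" where
  "rel_range \<Phi> R = {v \<in> Scar \<Phi>. \<exists>u\<in>Scar \<Phi>. R u v}"

definition functional_rel :: "('i, 'p, 'a) family \<Rightarrow> ('i \<times> 'a \<Rightarrow> 'i \<times> 'a \<Rightarrow> bool) \<Rightarrow> bool" where
  "functional_rel \<Phi> R \<longleftrightarrow>
     (\<forall>u\<in>Scar \<Phi>. \<forall>u'\<in>Scar \<Phi>. \<forall>v\<in>Scar \<Phi>. \<forall>v'\<in>Scar \<Phi>.
        Seq \<Phi> u u' \<and> Seq \<Phi> v v' \<and> R u v \<longrightarrow> R u' v') \<and>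
     (\<forall>u\<in>Scar \<Phi>. \<forall>v\<in>Scar \<Phi>. \<forall>v'\<in>Scar \<Phi>. R u v \<and> R u v' \<longrightarrow> Seq \<Phi> v v')"

definition rel_comp ::
  "('i, 'p, 'a) family \<Rightarrow> ('i \<times> 'a \<Rightarrow> 'i \<times> 'a \<Rightarrow> bool) \<Rightarrow> ('i \<times> 'a \<Rightarrow> 'i \<times> 'a \<Rightarrow> bool)
     \<Rightarrow> 'i \<times> 'a \<Rightarrow> 'i \<times> 'a \<Rightarrow> bool" where
  "rel_comp \<Phi> Q R u w \<longleftrightarrow> (\<exists>v\<in>Scar \<Phi>. R u v \<and> Q v w)"

definition id_rel :: "('i, 'p, 'a) family \<Rightarrow> 'i \<Rightarrow> 'i \<times> 'a \<Rightarrow> 'i \<times> 'a \<Rightarrow> bool" where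
  "id_rel \<Phi> i u v \<longleftrightarrow> u \<in> Fcheck \<Phi> i \<and> v \<in> Fcheck \<Phi> i \<and> Seq \<Phi> u v"

text \<open>Comp g f is the composite "g after f"; it is only meaningful when
ObEq (Cod f) (Dom g).\<close>

record ('o, 'm) setoid_cat =
  Ob :: "'o set"
  ObEq :: "'o \<Rightarrow> 'o \<Rightarrow> bool"
  Ar :: "'m set"
  ArEq :: "'m \<Rightarrow> 'm \<Rightarrow> bool"
  Dom :: "'m \<Rightarrow> 'o"
  Cod :: "'m \<Rightarrow> 'o"
  Comp :: "'m \<Rightarrow> 'm \<Rightarrow> 'm"
  Idt :: "'o \<Rightarrow> 'm"

definition is_functor ::
  "('o, 'm) setoid_cat \<Rightarrow> ('o2, 'm2) setoid_cat \<Rightarrow> ('o \<Rightarrow> 'o2) \<Rightarrow> ('m \<Rightarrow> 'm2) \<Rightarrow> bool" where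
  "is_functor A B Fo Fa \<longleftrightarrow>
     (\<forall>x\<in>Ob A. Fo x \<in> Ob B) \<and>
     (\<forall>x\<in>Ob A. \<forall>y\<in>Ob A. ObEq A x y \<longrightarrow> ObEq B (Fo x) (Fo y)) \<and>
     (\<forall>f\<in>Ar A. Fa f \<in> Ar B) \<and>
     (\<forall>f\<in>Ar A. \<forall>g\<in>Ar A. ArEq A f g \<longrightarrow> ArEq B (Fa f) (Fa g)) \<and>
     (\<forall>f\<in>Ar A. ObEq B (Dom B (Fa f)) (Fo (Dom A f)) \<and> ObEq B (Cod B (Fa f)) (Fo (Cod A f))) \<and>
     (\<forall>x\<in>Ob A. ArEq B (Fa (Idt A x)) (Idt B (Fo x))) \<and>
     (\<forall>f\<in>Ar A. \<forall>g\<in>Ar A. ObEq A (Cod A f) (Dom A g) \<longrightarrow>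
        ArEq B (Fa (Comp A g f)) (Comp B (Fa g) (Fa f)))"

definition is_identity_functor :: "('o, 'm) setoid_cat \<Rightarrow> ('o \<Rightarrow> 'o) \<Rightarrow> ('m \<Rightarrow> 'm) \<Rightarrow> bool" where
  "is_identity_functor A Fo Fa \<longleftrightarrow>
     (\<forall>x\<in>Ob A. ObEq A (Fo x) x) \<and> (\<forall>f\<in>Ar A. ArEq A (Fa f) f)"

definition catC :: "('i, 'p, 'a) family \<Rightarrow> ('i, 'i \<times> 'i \<times> ('a \<Rightarrow> 'a)) setoid_cat" where
  "catC \<Phi> =
    \<lparr> Ob = Ic \<Phi>,
      ObEq = Ieq \<Phi>,
      Ar = {(i, j, f). i \<in> Ic \<Phi> \<and> j \<in> Ic \<Phi> \<and>
                        ext_fun (Fc \<Phi> i) (Feq \<Phi> i) (Fc \<Phi> j) (Feq \<Phi> j) f},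
      ArEq = (\<lambda>(i, j, f) (i', j', f').
                \<exists>p\<in>Ip \<Phi> i i'. \<exists>q\<in>Ip \<Phi> j j'.
                  ext_eq (Fc \<Phi> i) (Feq \<Phi> j') (Ftr \<Phi> q \<circ> f) (f' \<circ> Ftr \<Phi> p)),
      Dom = (\<lambda>(i, j, f). i),
      Cod = (\<lambda>(i, j, f). j),
      Comp = (\<lambda>(j', k, g) (i, j, f). (i, k, g \<circ> Ftr \<Phi> (SOME p. p \<in> Ip \<Phi> j j') \<circ> f)),
      Idt = (\<lambda>i. (i, i, id)) \<rparr>"

definition S_arrow :: "('i, 'p, 'a) family \<Rightarrow> 'i \<Rightarrow> 'i \<Rightarrow> ('i \<times> 'a \<Rightarrow> 'i \<times> 'a \<Rightarrow> bool) \<Rightarrow> bool" where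
  "S_arrow \<Phi> i j R \<longleftrightarrow>
     functional_rel \<Phi> R \<and> rel_dom \<Phi> R = Fcheck \<Phi> i \<and> rel_range \<Phi> R \<subseteq> Fcheck \<Phi> j"

definition catS ::
  "('i, 'p, 'a) family \<Rightarrow> ('i, 'i \<times> 'i \<times> ('i \<times> 'a \<Rightarrow> 'i \<times> 'a \<Rightarrow> bool)) setoid_cat" where
  "catS \<Phi> =
    \<lparr> Ob = Ic \<Phi>,
      ObEq = Ieq \<Phi>,
      Ar = {(i, j, R). i \<in> Ic \<Phi> \<and> j \<in> Ic \<Phi> \<and> S_arrow \<Phi> i j R},
      ArEq = (\<lambda>(i, j, R) (i', j', R'). Ieq \<Phi> i i' \<and> Ieq \<Phi> j j' \<and> same_ext \<Phi> R R'),
      Dom = (\<lambda>(i, j, R). i),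
      Cod = (\<lambda>(i, j, R). j),
      Comp = (\<lambda>(j', k, Q) (i, j, R). (i, k, rel_comp \<Phi> Q R)),
      Idt = (\<lambda>i. (i, i, id_rel \<Phi> i)) \<rparr>"

definition M_arr :: "('i, 'p, 'a) family \<Rightarrow> 'i \<times> 'i \<times> ('a \<Rightarrow> 'a)
                      \<Rightarrow> 'i \<times> 'i \<times> ('i \<times> 'a \<Rightarrow> 'i \<times> 'a \<Rightarrow> bool)" where
  "M_arr \<Phi> = (\<lambda>(i, j, f). (i, j, graph \<Phi> i j f))"

definition N_fun :: "('i, 'p, 'a) family \<Rightarrow> 'i \<Rightarrow> 'i \<Rightarrow> ('i \<times> 'a \<Rightarrow> 'i \<times> 'a \<Rightarrow> bool) \<Rightarrow> 'a \<Rightarrow> 'a" where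
  "N_fun \<Phi> i j R = (SOME f. ext_fun (Fc \<Phi> i) (Feq \<Phi> i) (Fc \<Phi> j) (Feq \<Phi> j) f \<and>
                             same_ext \<Phi> (graph \<Phi> i j f) R)"

definition N_arr :: "('i, 'p, 'a) family \<Rightarrow> 'i \<times> 'i \<times> ('i \<times> 'a \<Rightarrow> 'i \<times> 'a \<Rightarrow> bool)
                      \<Rightarrow> 'i \<times> 'i \<times> ('a \<Rightarrow> 'a)" where
  "N_arr \<Phi> = (\<lambda>(i, j, R). (i, j, N_fun \<Phi> i j R))"

end

theory Submission
  imports Defs
begin

text \<open>
Proof irrelevance makes the Sigma-setoid well behaved: two points over the same index are
equal in S iff they are equal in the fibre, and a point may be transported along any proof
of index equality. Consequently the graph construction reflects as well as preserves equality
of arrows: (i, j, f) and (i', j', f') are equal in C(I,F) iff f and f' send S-equal inputs to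
S-equal outputs, iff their graphs have the same extension. Conversely, a functional relation
with domain the fibre over i assigns to each x in F(i) a value in F(j), unique up to equality,
and the resulting extensional function has the relation as its graph. So M (N R) agrees with R,
and since M reflects equality, N preserves equality, identities and composites and N (M f)
agrees with f.
\<close>

lemma same_ext_refl: "same_ext \<Phi> R R"
  unfolding same_ext_def by blast

lemma same_ext_sym: "same_ext \<Phi> R R' \<Longrightarrow> same_ext \<Phi> R' R"
  unfolding same_ext_def by blast

lemma same_ext_trans: "same_ext \<Phi> R R' \<Longrightarrow> same_ext \<Phi> R' R'' \<Longrightarrow> same_ext \<Phi> R R''"
  unfolding same_ext_def by blast

lemma rel_comp_same_ext:
  "same_ext \<Phi> Q Q' \<Longrightarrow> same_ext \<Phi> R R' \<Longrightarrow> same_ext \<Phi> (rel_comp \<Phi> Q R) (rel_comp \<Phi> Q' R')"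
  unfolding same_ext_def rel_comp_def by blast

lemma S_arrow_same_ext: "S_arrow \<Phi> i j R \<Longrightarrow> same_ext \<Phi> R R' \<Longrightarrow> S_arrow \<Phi> i j R'"
  unfolding S_arrow_def functional_rel_def rel_dom_def rel_range_def same_ext_def
  by (smt (verit) Collect_cong)

lemma ext_fun_in: "ext_fun A eqA B eqB f \<Longrightarrow> x \<in> A \<Longrightarrow> f x \<in> B"
  unfolding ext_fun_def by blast

lemma ext_fun_cong:
  "ext_fun A eqA B eqB f \<Longrightarrow> x \<in> A \<Longrightarrow> y \<in> A \<Longrightarrow> eqA x y \<Longrightarrow> eqB (f x) (f y)"
  unfolding ext_fun_def by blast

lemma ext_fun_comp: "ext_fun A eqA B eqB f \<Longrightarrow> ext_fun B eqB C eqC g \<Longrightarrow> ext_fun A eqA C eqC (g \<circ> f)"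
  unfolding ext_fun_def by auto

lemma ext_fun_id: "ext_fun A eqA A eqA id"
  unfolding ext_fun_def by auto

lemma catC_simps:
  "Ob (catC \<Phi>) = Ic \<Phi>" "ObEq (catC \<Phi>) = Ieq \<Phi>"
  "(i, j, f) \<in> Ar (catC \<Phi>) \<longleftrightarrow>
    i \<in> Ic \<Phi> \<and> j \<in> Ic \<Phi> \<and> ext_fun (Fc \<Phi> i) (Feq \<Phi> i) (Fc \<Phi> j) (Feq \<Phi> j) f"
  "ArEq (catC \<Phi>) (i, j, f) (i', j', f') \<longleftrightarrow>
    (\<exists>p\<in>Ip \<Phi> i i'. \<exists>q\<in>Ip \<Phi> j j'. \<forall>x\<in>Fc \<Phi> i. Feq \<Phi> j' (Ftr \<Phi> q (f x)) (f' (Ftr \<Phi> p x)))"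
  "Dom (catC \<Phi>) (i, j, f) = i" "Cod (catC \<Phi>) (i, j, f) = j"
  "Comp (catC \<Phi>) (j', k, g) (i, j, f) = (i, k, g \<circ> Ftr \<Phi> (SOME p. p \<in> Ip \<Phi> j j') \<circ> f)"
  "Idt (catC \<Phi>) i = (i, i, id)"
  by (simp_all add: catC_def ext_eq_def)

lemma catS_simps:
  "Ob (catS \<Phi>) = Ic \<Phi>" "ObEq (catS \<Phi>) = Ieq \<Phi>"
  "(i, j, R) \<in> Ar (catS \<Phi>) \<longleftrightarrow> i \<in> Ic \<Phi> \<and> j \<in> Ic \<Phi> \<and> S_arrow \<Phi> i j R"
  "ArEq (catS \<Phi>) (i, j, R) (i', j', R') \<longleftrightarrow> Ieq \<Phi> i i' \<and> Ieq \<Phi> j j' \<and> same_ext \<Phi> R R'"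
  "Dom (catS \<Phi>) (i, j, R) = i" "Cod (catS \<Phi>) (i, j, R) = j"
  "Comp (catS \<Phi>) (j', k, Q) (i, j, R) = (i, k, rel_comp \<Phi> Q R)"
  "Idt (catS \<Phi>) i = (i, i, id_rel \<Phi> i)"
  by (simp_all add: catS_def)

locale proof_irrelevant_family =
  fixes \<Phi> :: "('i, 'p, 'a) family"
  assumes pi_family: "pi_family \<Phi>"
begin

abbreviation fibre_map :: "'i \<Rightarrow> 'i \<Rightarrow> ('a \<Rightarrow> 'a) \<Rightarrow> bool" where
  "fibre_map i j f \<equiv> ext_fun (Fc \<Phi> i) (Feq \<Phi> i) (Fc \<Phi> j) (Feq \<Phi> j) f"

lemma Irefl_in_Ip: "x \<in> Ic \<Phi> \<Longrightarrow> Irefl \<Phi> x \<in> Ip \<Phi> x x"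
  using pi_family unfolding pi_family_def by auto

lemma Isym_in_Ip: "x \<in> Ic \<Phi> \<Longrightarrow> y \<in> Ic \<Phi> \<Longrightarrow> p \<in> Ip \<Phi> x y \<Longrightarrow> Isym \<Phi> p \<in> Ip \<Phi> y x"
  using pi_family unfolding pi_family_def by auto

lemma Itrans_in_Ip:
  "x \<in> Ic \<Phi> \<Longrightarrow> y \<in> Ic \<Phi> \<Longrightarrow> z \<in> Ic \<Phi> \<Longrightarrow> p \<in> Ip \<Phi> x y \<Longrightarrow> q \<in> Ip \<Phi> y z
    \<Longrightarrow> Itrans \<Phi> q p \<in> Ip \<Phi> x z"
  using pi_family unfolding pi_family_def by auto

lemma Ieq_refl: "x \<in> Ic \<Phi> \<Longrightarrow> Ieq \<Phi> x x"
  unfolding Ieq_def using Irefl_in_Ip by blast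

lemma Ieq_sym: "x \<in> Ic \<Phi> \<Longrightarrow> y \<in> Ic \<Phi> \<Longrightarrow> Ieq \<Phi> x y \<Longrightarrow> Ieq \<Phi> y x"
  unfolding Ieq_def using Isym_in_Ip by blast

lemma Feq_refl: "x \<in> Ic \<Phi> \<Longrightarrow> a \<in> Fc \<Phi> x \<Longrightarrow> Feq \<Phi> x a a"
  using pi_family unfolding pi_family_def setoid_on_def by meson

lemma Feq_sym: "x \<in> Ic \<Phi> \<Longrightarrow> a \<in> Fc \<Phi> x \<Longrightarrow> b \<in> Fc \<Phi> x \<Longrightarrow> Feq \<Phi> x a b \<Longrightarrow> Feq \<Phi> x b a"
  using pi_family unfolding pi_family_def setoid_on_def by meson

lemma Feq_trans:
  "x \<in> Ic \<Phi> \<Longrightarrow> a \<in> Fc \<Phi> x \<Longrightarrow> b \<in> Fc \<Phi> x \<Longrightarrow> c \<in> Fc \<Phi> x \<Longrightarrow>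
    Feq \<Phi> x a b \<Longrightarrow> Feq \<Phi> x b c \<Longrightarrow> Feq \<Phi> x a c"
  using pi_family unfolding pi_family_def setoid_on_def by meson

lemma ext_fun_Ftr: "x \<in> Ic \<Phi> \<Longrightarrow> y \<in> Ic \<Phi> \<Longrightarrow> p \<in> Ip \<Phi> x y \<Longrightarrow> fibre_map x y (Ftr \<Phi> p)"
  using pi_family unfolding pi_family_def by blast

lemma Ftr_in:
  "x \<in> Ic \<Phi> \<Longrightarrow> y \<in> Ic \<Phi> \<Longrightarrow> p \<in> Ip \<Phi> x y \<Longrightarrow> a \<in> Fc \<Phi> x \<Longrightarrow> Ftr \<Phi> p a \<in> Fc \<Phi> y"
  by (rule ext_fun_in[OF ext_fun_Ftr])

lemma Ftr_cong:
  "x \<in> Ic \<Phi> \<Longrightarrow> y \<in> Ic \<Phi> \<Longrightarrow> p \<in> Ip \<Phi> x y \<Longrightarrow> a \<in> Fc \<Phi> x \<Longrightarrow> b \<in> Fc \<Phi> x \<Longrightarrow>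
    Feq \<Phi> x a b \<Longrightarrow> Feq \<Phi> y (Ftr \<Phi> p a) (Ftr \<Phi> p b)"
  by (rule ext_fun_cong[OF ext_fun_Ftr])

lemma Ftr_Irefl: "x \<in> Ic \<Phi> \<Longrightarrow> a \<in> Fc \<Phi> x \<Longrightarrow> Feq \<Phi> x (Ftr \<Phi> (Irefl \<Phi> x) a) a"
  using pi_family unfolding pi_family_def ext_eq_def by auto

lemma Ftr_proof_irrelevant:
  "x \<in> Ic \<Phi> \<Longrightarrow> y \<in> Ic \<Phi> \<Longrightarrow> p \<in> Ip \<Phi> x y \<Longrightarrow> q \<in> Ip \<Phi> x y \<Longrightarrow> a \<in> Fc \<Phi> x \<Longrightarrow>
    Feq \<Phi> y (Ftr \<Phi> p a) (Ftr \<Phi> q a)"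
  using pi_family unfolding pi_family_def ext_eq_def by meson

lemma Ftr_Itrans:
  "x \<in> Ic \<Phi> \<Longrightarrow> y \<in> Ic \<Phi> \<Longrightarrow> z \<in> Ic \<Phi> \<Longrightarrow> p \<in> Ip \<Phi> x y \<Longrightarrow> q \<in> Ip \<Phi> y z \<Longrightarrow>
    a \<in> Fc \<Phi> x \<Longrightarrow> Feq \<Phi> z (Ftr \<Phi> q (Ftr \<Phi> p a)) (Ftr \<Phi> (Itrans \<Phi> q p) a)"
  using pi_family unfolding pi_family_def ext_eq_def by (simp add: Ball_def)

lemma Ftr_comp:
  assumes "x \<in> Ic \<Phi>" "y \<in> Ic \<Phi>" "z \<in> Ic \<Phi>" "p \<in> Ip \<Phi> x y" "q \<in> Ip \<Phi> y z" "r \<in> Ip \<Phi> x z"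
    and "a \<in> Fc \<Phi> x"
  shows "Feq \<Phi> z (Ftr \<Phi> q (Ftr \<Phi> p a)) (Ftr \<Phi> r a)"
proof -
  have qp: "Itrans \<Phi> q p \<in> Ip \<Phi> x z" using Itrans_in_Ip assms by blast
  show ?thesis
    by (rule Feq_trans[OF _ _ _ _ Ftr_Itrans[OF assms(1-5,7)]
          Ftr_proof_irrelevant[OF assms(1,3) qp assms(6,7)]])
      (use assms qp Ftr_in in blast)+
qed

lemma Scar_Pair [simp]: "(x, a) \<in> Scar \<Phi> \<longleftrightarrow> x \<in> Ic \<Phi> \<and> a \<in> Fc \<Phi> x"
  by (simp add: Scar_def)

lemma Seq_Pair: "Seq \<Phi> (x, a) (y, b) \<longleftrightarrow> (\<exists>p\<in>Ip \<Phi> x y. Feq \<Phi> y (Ftr \<Phi> p a) b)"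
  by (simp add: Seq_def)

lemma Seq_Ftr:
  "x \<in> Ic \<Phi> \<Longrightarrow> y \<in> Ic \<Phi> \<Longrightarrow> p \<in> Ip \<Phi> x y \<Longrightarrow> a \<in> Fc \<Phi> x \<Longrightarrow> Seq \<Phi> (x, a) (y, Ftr \<Phi> p a)"
  unfolding Seq_Pair using Feq_refl Ftr_in by blast

lemma Seq_any_proof:
  assumes "Seq \<Phi> (x, a) (y, b)" and "r \<in> Ip \<Phi> x y"
    and "x \<in> Ic \<Phi>" "y \<in> Ic \<Phi>" "a \<in> Fc \<Phi> x" "b \<in> Fc \<Phi> y"
  shows "Feq \<Phi> y (Ftr \<Phi> r a) b"
proof -
  obtain p where p: "p \<in> Ip \<Phi> x y" "Feq \<Phi> y (Ftr \<Phi> p a) b"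
    using assms(1) by (auto simp: Seq_Pair)
  show ?thesis
    by (rule Feq_trans[OF _ _ _ _ Ftr_proof_irrelevant[OF _ _ assms(2) p(1)] p(2)])
      (use assms p Ftr_in in blast)+
qed

lemma Seq_fibre_iff:
  assumes "x \<in> Ic \<Phi>" "a \<in> Fc \<Phi> x" "b \<in> Fc \<Phi> x"
  shows "Seq \<Phi> (x, a) (x, b) \<longleftrightarrow> Feq \<Phi> x a b"
proof
  have xx: "Irefl \<Phi> x \<in> Ip \<Phi> x x" using Irefl_in_Ip assms by blast
  then have ra: "Ftr \<Phi> (Irefl \<Phi> x) a \<in> Fc \<Phi> x" using Ftr_in assms by blast
  {
    assume "Seq \<Phi> (x, a) (x, b)"
    then have "Feq \<Phi> x (Ftr \<Phi> (Irefl \<Phi> x) a) b" using Seq_any_proof xx assms by blast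
    then show "Feq \<Phi> x a b"
      using Feq_trans[OF _ _ ra _ Feq_sym[OF _ ra _ Ftr_Irefl]] assms by blast
  }
  assume "Feq \<Phi> x a b"
  then have "Feq \<Phi> x (Ftr \<Phi> (Irefl \<Phi> x) a) b"
    using Feq_trans[OF _ ra _ _ Ftr_Irefl] assms by blast
  then show "Seq \<Phi> (x, a) (x, b)" using xx by (auto simp: Seq_Pair)
qed

lemma Seq_refl: "u \<in> Scar \<Phi> \<Longrightarrow> Seq \<Phi> u u"
  by (cases u) (simp add: Seq_fibre_iff Feq_refl)

lemma Seq_sym:
  assumes "u \<in> Scar \<Phi>" "v \<in> Scar \<Phi>" "Seq \<Phi> u v"
  shows "Seq \<Phi> v u"
proof -
  obtain x a y b where uv: "u = (x, a)" "v = (y, b)" by (cases u, cases v)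
  with assms obtain p where p: "p \<in> Ip \<Phi> x y" "Feq \<Phi> y (Ftr \<Phi> p a) b"
    by (auto simp: Seq_Pair)
  have xy: "x \<in> Ic \<Phi>" "a \<in> Fc \<Phi> x" "y \<in> Ic \<Phi>" "b \<in> Fc \<Phi> y"
    using assms uv by auto
  have q: "Isym \<Phi> p \<in> Ip \<Phi> y x" using Isym_in_Ip p xy by blast
  have pa: "Ftr \<Phi> p a \<in> Fc \<Phi> y" using Ftr_in p xy by blast
  have "Feq \<Phi> x (Ftr \<Phi> (Isym \<Phi> p) b) (Ftr \<Phi> (Isym \<Phi> p) (Ftr \<Phi> p a))"
    using Ftr_cong[OF _ _ q _ pa Feq_sym[OF _ pa _ p(2)]] xy by blast
  moreover have "Feq \<Phi> x (Ftr \<Phi> (Isym \<Phi> p) (Ftr \<Phi> p a)) a"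
    by (rule Feq_trans[OF _ _ _ _ Ftr_comp[OF _ _ _ p(1) q Irefl_in_Ip] Ftr_Irefl])
      (use xy pa q Ftr_in Irefl_in_Ip in blast)+
  ultimately have "Feq \<Phi> x (Ftr \<Phi> (Isym \<Phi> p) b) a"
    by (rule Feq_trans[rotated 4]) (use xy pa q Ftr_in in blast)+
  then show ?thesis using q uv by (auto simp: Seq_Pair)
qed

lemma Seq_trans:
  assumes "u \<in> Scar \<Phi>" "v \<in> Scar \<Phi>" "w \<in> Scar \<Phi>" "Seq \<Phi> u v" "Seq \<Phi> v w"
  shows "Seq \<Phi> u w"
proof -
  obtain x a y b z c where uvw: "u = (x, a)" "v = (y, b)" "w = (z, c)"
    by (cases u, cases v, cases w)
  have xyz: "x \<in> Ic \<Phi>" "a \<in> Fc \<Phi> x" "y \<in> Ic \<Phi>" "b \<in> Fc \<Phi> y" "z \<in> Ic \<Phi>" "c \<in> Fc \<Phi> z"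
    using assms uvw by auto
  obtain p q where p: "p \<in> Ip \<Phi> x y" "Feq \<Phi> y (Ftr \<Phi> p a) b"
    and q: "q \<in> Ip \<Phi> y z" "Feq \<Phi> z (Ftr \<Phi> q b) c"
    using assms uvw by (auto simp: Seq_Pair)
  have r: "Itrans \<Phi> q p \<in> Ip \<Phi> x z" using Itrans_in_Ip p q xyz by blast
  have pa: "Ftr \<Phi> p a \<in> Fc \<Phi> y" using Ftr_in p xyz by blast
  have "Feq \<Phi> z (Ftr \<Phi> (Itrans \<Phi> q p) a) (Ftr \<Phi> q (Ftr \<Phi> p a))"
    by (rule Feq_sym[OF _ _ _ Ftr_comp[OF _ _ _ p(1) q(1) r]]) (use xyz pa q r Ftr_in in blast)+
  moreover have "Feq \<Phi> z (Ftr \<Phi> q (Ftr \<Phi> p a)) c"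
    by (rule Feq_trans[OF _ _ _ _ Ftr_cong[OF _ _ q(1) pa _ p(2)] q(2)])
      (use xyz pa q Ftr_in in blast)+
  ultimately have "Feq \<Phi> z (Ftr \<Phi> (Itrans \<Phi> q p) a) c"
    by (rule Feq_trans[rotated 4]) (use xyz pa q r Ftr_in in blast)+
  then show ?thesis using r uvw by (auto simp: Seq_Pair)
qed

lemma graph_iff:
  assumes "i \<in> Ic \<Phi>" "j \<in> Ic \<Phi>" "fibre_map i j f" "u \<in> Scar \<Phi>" "v \<in> Scar \<Phi>"
    and x: "x \<in> Fc \<Phi> i" "Seq \<Phi> u (i, x)"
  shows "graph \<Phi> i j f u v \<longleftrightarrow> Seq \<Phi> v (j, f x)"
proof
  assume "graph \<Phi> i j f u v"
  then obtain x' where x': "x' \<in> Fc \<Phi> i" "Seq \<Phi> u (i, x')" "Seq \<Phi> v (j, f x')"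
    unfolding graph_def by blast
  have "Seq \<Phi> (i, x') (i, x)"
    using Seq_trans[OF _ assms(4) _ Seq_sym[OF assms(4) _ x'(2)] x(2)] assms x' by simp
  then have "Feq \<Phi> j (f x') (f x)"
    using ext_fun_cong[OF assms(3)] Seq_fibre_iff assms x' by blast
  then have "Seq \<Phi> (j, f x') (j, f x)"
    using Seq_fibre_iff ext_fun_in[OF assms(3)] assms x' by blast
  then show "Seq \<Phi> v (j, f x)"
    using Seq_trans[OF assms(5) _ _ x'(3)] ext_fun_in[OF assms(3)] assms x' by simp
qed (use x in \<open>auto simp: graph_def\<close>)

lemma graph_S_arrow:
  assumes i: "i \<in> Ic \<Phi>" and j: "j \<in> Ic \<Phi>" and f: "fibre_map i j f"
  shows "S_arrow \<Phi> i j (graph \<Phi> i j f)"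
  unfolding S_arrow_def functional_rel_def
proof (intro conjI ballI impI subsetI equalityI)
  fix u u' v v' assume uv: "u \<in> Scar \<Phi>" "u' \<in> Scar \<Phi>" "v \<in> Scar \<Phi>" "v' \<in> Scar \<Phi>"
    and "Seq \<Phi> u u' \<and> Seq \<Phi> v v' \<and> graph \<Phi> i j f u v"
  then have uu': "Seq \<Phi> u' u" and vv': "Seq \<Phi> v' v" and "graph \<Phi> i j f u v"
    using Seq_sym by blast+
  then obtain x where x: "x \<in> Fc \<Phi> i" "Seq \<Phi> u (i, x)" "Seq \<Phi> v (j, f x)"
    unfolding graph_def by blast
  have "(i, x) \<in> Scar \<Phi>" "(j, f x) \<in> Scar \<Phi>" using i j x ext_fun_in[OF f] by auto
  then have "Seq \<Phi> u' (i, x)" "Seq \<Phi> v' (j, f x)"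
    using Seq_trans[OF _ _ _ uu' x(2)] Seq_trans[OF _ _ _ vv' x(3)] uv by auto
  then show "graph \<Phi> i j f u' v'" unfolding graph_def using x(1) by blast
next
  fix u v v' assume uv: "u \<in> Scar \<Phi>" "v \<in> Scar \<Phi>" "v' \<in> Scar \<Phi>"
    and g: "graph \<Phi> i j f u v \<and> graph \<Phi> i j f u v'"
  then obtain x where x: "x \<in> Fc \<Phi> i" "Seq \<Phi> u (i, x)"
    unfolding graph_def by blast
  have fx: "(j, f x) \<in> Scar \<Phi>" using j x ext_fun_in[OF f] by auto
  have "Seq \<Phi> v (j, f x)" "Seq \<Phi> v' (j, f x)"
    using graph_iff[OF i j f _ _ x] g uv by auto
  then show "Seq \<Phi> v v'" using Seq_trans[OF _ fx _ _ Seq_sym[OF _ fx]] uv by blast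
next
  fix u assume "u \<in> Fcheck \<Phi> i"
  then obtain x where "u \<in> Scar \<Phi>" "x \<in> Fc \<Phi> i" "Seq \<Phi> u (i, x)"
    unfolding Fcheck_def by blast
  moreover have "(j, f x) \<in> Scar \<Phi>" using j ext_fun_in[OF f] calculation by simp
  ultimately show "u \<in> rel_dom \<Phi> (graph \<Phi> i j f)"
    unfolding rel_dom_def graph_def using Seq_refl by blast
qed (use ext_fun_in[OF f] in \<open>auto simp: rel_dom_def rel_range_def Fcheck_def graph_def\<close>)

lemma graph_transfer:
  assumes "i \<in> Ic \<Phi>" "j \<in> Ic \<Phi>" "fibre_map i j f" "i' \<in> Ic \<Phi>" "j' \<in> Ic \<Phi>" "fibre_map i' j' f'"
    and "u \<in> Scar \<Phi>" "v \<in> Scar \<Phi>" "graph \<Phi> i j f u v"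
    and "\<And>x. x \<in> Fc \<Phi> i \<Longrightarrow> \<exists>x'\<in>Fc \<Phi> i'. Seq \<Phi> (i, x) (i', x') \<and> Seq \<Phi> (j, f x) (j', f' x')"
  shows "graph \<Phi> i' j' f' u v"
proof -
  obtain x where x: "x \<in> Fc \<Phi> i" "Seq \<Phi> u (i, x)" "Seq \<Phi> v (j, f x)"
    using assms(9) unfolding graph_def by blast
  then obtain x' where x': "x' \<in> Fc \<Phi> i'" "Seq \<Phi> (i, x) (i', x')" "Seq \<Phi> (j, f x) (j', f' x')"
    using assms(10) by blast
  have "Seq \<Phi> u (i', x')" "Seq \<Phi> v (j', f' x')"
    using Seq_trans[OF assms(7) _ _ x(2) x'(2)] Seq_trans[OF assms(8) _ _ x(3) x'(3)]
      ext_fun_in[OF assms(3)] ext_fun_in[OF assms(6)] assms x x' by auto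
  then show ?thesis unfolding graph_def using x'(1) by blast
qed

lemma graph_same_ext_iff:
  assumes i: "i \<in> Ic \<Phi>" and j: "j \<in> Ic \<Phi>" and f: "fibre_map i j f"
    and i': "i' \<in> Ic \<Phi>" and j': "j' \<in> Ic \<Phi>" and f': "fibre_map i' j' f'"
    and ii': "Ieq \<Phi> i i'"
  shows "same_ext \<Phi> (graph \<Phi> i j f) (graph \<Phi> i' j' f') \<longleftrightarrow>
    (\<forall>x\<in>Fc \<Phi> i. \<forall>x'\<in>Fc \<Phi> i'. Seq \<Phi> (i, x) (i', x') \<longrightarrow> Seq \<Phi> (j, f x) (j', f' x'))"
proof (intro iffI ballI impI)
  fix x x' assume s: "same_ext \<Phi> (graph \<Phi> i j f) (graph \<Phi> i' j' f')"
    and x: "x \<in> Fc \<Phi> i" "x' \<in> Fc \<Phi> i'" "Seq \<Phi> (i, x) (i', x')"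
  have fx: "(i, x) \<in> Scar \<Phi>" "(j, f x) \<in> Scar \<Phi>" using i j x ext_fun_in[OF f] by auto
  then have "graph \<Phi> i j f (i, x) (j, f x)" unfolding graph_def using x Seq_refl by blast
  then have "graph \<Phi> i' j' f' (i, x) (j, f x)" using s fx unfolding same_ext_def by blast
  then show "Seq \<Phi> (j, f x) (j', f' x')" using graph_iff[OF i' j' f' fx x(2,3)] by blast
next
  assume H: "\<forall>x\<in>Fc \<Phi> i. \<forall>x'\<in>Fc \<Phi> i'. Seq \<Phi> (i, x) (i', x') \<longrightarrow> Seq \<Phi> (j, f x) (j', f' x')"
  obtain p p' where p: "p \<in> Ip \<Phi> i i'" and p': "p' \<in> Ip \<Phi> i' i"
    using ii' Ieq_sym[OF i i' ii'] unfolding Ieq_def by blast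
  show "same_ext \<Phi> (graph \<Phi> i j f) (graph \<Phi> i' j' f')"
    unfolding same_ext_def
  proof (intro ballI iffI)
    fix u v assume uv: "u \<in> Scar \<Phi>" "v \<in> Scar \<Phi>"
    {
      assume "graph \<Phi> i j f u v"
      moreover have "\<exists>x'\<in>Fc \<Phi> i'. Seq \<Phi> (i, x) (i', x') \<and> Seq \<Phi> (j, f x) (j', f' x')"
        if "x \<in> Fc \<Phi> i" for x
        using H Seq_Ftr[OF i i' p that] Ftr_in[OF i i' p that] that by blast
      ultimately show "graph \<Phi> i' j' f' u v"
        using graph_transfer[OF i j f i' j' f' uv] by blast
    }
    assume "graph \<Phi> i' j' f' u v"
    moreover have "\<exists>x\<in>Fc \<Phi> i. Seq \<Phi> (i', x') (i, x) \<and> Seq \<Phi> (j', f' x') (j, f x)"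
      if x': "x' \<in> Fc \<Phi> i'" for x'
    proof -
      have x: "Ftr \<Phi> p' x' \<in> Fc \<Phi> i" "Seq \<Phi> (i', x') (i, Ftr \<Phi> p' x')"
        using Ftr_in[OF i' i p' x'] Seq_Ftr[OF i' i p' x'] .
      then have "Seq \<Phi> (j, f (Ftr \<Phi> p' x')) (j', f' x')"
        using H Seq_sym i i' x' by simp
      then show ?thesis using x Seq_sym j j' ext_fun_in[OF f] ext_fun_in[OF f'] x' by auto
    qed
    ultimately show "graph \<Phi> i j f u v"
      using graph_transfer[OF i' j' f' i j f uv] by blast
  qed
qed

lemma graph_comp:
  assumes i: "i \<in> Ic \<Phi>" and j: "j \<in> Ic \<Phi>" and j': "j' \<in> Ic \<Phi>" and k: "k \<in> Ic \<Phi>"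
    and f: "fibre_map i j f" and g: "fibre_map j' k g" and p: "p \<in> Ip \<Phi> j j'"
  shows "same_ext \<Phi> (graph \<Phi> i k (g \<circ> Ftr \<Phi> p \<circ> f)) (rel_comp \<Phi> (graph \<Phi> j' k g) (graph \<Phi> i j f))"
  unfolding same_ext_def rel_comp_def
proof (intro ballI iffI)
  fix u w assume u: "u \<in> Scar \<Phi>" and w: "w \<in> Scar \<Phi>"
  {
    assume "graph \<Phi> i k (g \<circ> Ftr \<Phi> p \<circ> f) u w"
    then obtain x where x: "x \<in> Fc \<Phi> i" "Seq \<Phi> u (i, x)" "Seq \<Phi> w (k, g (Ftr \<Phi> p (f x)))"
      unfolding graph_def by auto
    have fx: "f x \<in> Fc \<Phi> j" using ext_fun_in[OF f x(1)] .
    have v: "(j, f x) \<in> Scar \<Phi>" using j fx by simp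
    have "graph \<Phi> i j f u (j, f x)" using x Seq_refl[OF v] unfolding graph_def by blast
    moreover have "graph \<Phi> j' k g (j, f x) w"
      using graph_iff[OF j' k g v w Ftr_in[OF j j' p fx] Seq_Ftr[OF j j' p fx]] x(3) by blast
    ultimately show "\<exists>v\<in>Scar \<Phi>. graph \<Phi> i j f u v \<and> graph \<Phi> j' k g v w" using v by blast
  }
  assume "\<exists>v\<in>Scar \<Phi>. graph \<Phi> i j f u v \<and> graph \<Phi> j' k g v w"
  then obtain v x where v: "v \<in> Scar \<Phi>" "graph \<Phi> j' k g v w"
    and x: "x \<in> Fc \<Phi> i" "Seq \<Phi> u (i, x)" "Seq \<Phi> v (j, f x)"
    unfolding graph_def by blast
  have fx: "f x \<in> Fc \<Phi> j" using ext_fun_in[OF f x(1)] .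
  have "Seq \<Phi> v (j', Ftr \<Phi> p (f x))"
    using Seq_trans[OF v(1) _ _ x(3) Seq_Ftr[OF j j' p fx]] j j' fx Ftr_in[OF j j' p fx] by simp
  then have "Seq \<Phi> w (k, g (Ftr \<Phi> p (f x)))"
    using graph_iff[OF j' k g v(1) w Ftr_in[OF j j' p fx]] v(2) by blast
  then show "graph \<Phi> i k (g \<circ> Ftr \<Phi> p \<circ> f) u w" using x unfolding graph_def by auto
qed

lemma graph_id:
  assumes i: "i \<in> Ic \<Phi>"
  shows "same_ext \<Phi> (graph \<Phi> i i id) (id_rel \<Phi> i)"
  unfolding same_ext_def
proof (intro ballI iffI)
  fix u v assume uv: "u \<in> Scar \<Phi>" "v \<in> Scar \<Phi>"
  {
    assume "graph \<Phi> i i id u v"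
    then obtain x where x: "x \<in> Fc \<Phi> i" "Seq \<Phi> u (i, x)" "Seq \<Phi> v (i, x)"
      unfolding graph_def by auto
    then have "Seq \<Phi> u v" using Seq_trans[OF _ _ _ x(2) Seq_sym] uv i by simp
    then show "id_rel \<Phi> i u v" unfolding id_rel_def Fcheck_def using uv x by blast
  }
  assume "id_rel \<Phi> i u v"
  then obtain x where x: "x \<in> Fc \<Phi> i" "Seq \<Phi> u (i, x)" "Seq \<Phi> u v"
    unfolding id_rel_def Fcheck_def by blast
  then have "Seq \<Phi> v (i, x)" using Seq_trans[OF _ _ _ Seq_sym] uv i by (meson Scar_Pair)
  then show "graph \<Phi> i i id u v" using x unfolding graph_def by auto
qed

lemma S_arrow_Seq_cong:
  assumes "S_arrow \<Phi> i j R" "u \<in> Scar \<Phi>" "u' \<in> Scar \<Phi>" "v \<in> Scar \<Phi>" "v' \<in> Scar \<Phi>"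
    and "Seq \<Phi> u u'" "Seq \<Phi> v v'" "R u v"
  shows "R u' v'"
  using assms unfolding S_arrow_def functional_rel_def by blast

lemma S_arrow_Seq_unique:
  assumes "S_arrow \<Phi> i j R" "u \<in> Scar \<Phi>" "v \<in> Scar \<Phi>" "v' \<in> Scar \<Phi>" "R u v" "R u v'"
  shows "Seq \<Phi> v v'"
  using assms unfolding S_arrow_def functional_rel_def by blast

lemma S_arrow_total:
  assumes i: "i \<in> Ic \<Phi>" and j: "j \<in> Ic \<Phi>" and R: "S_arrow \<Phi> i j R" and x: "x \<in> Fc \<Phi> i"
  shows "\<exists>y\<in>Fc \<Phi> j. R (i, x) (j, y)"
proof -
  have ix: "(i, x) \<in> Scar \<Phi>" using i x by simp
  then have "(i, x) \<in> rel_dom \<Phi> R"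
    using R x Seq_refl unfolding S_arrow_def Fcheck_def by blast
  then obtain v where v: "v \<in> Scar \<Phi>" "R (i, x) v" unfolding rel_dom_def by blast
  then have "v \<in> Fcheck \<Phi> j" using R ix unfolding S_arrow_def rel_range_def by blast
  then obtain y where y: "y \<in> Fc \<Phi> j" "Seq \<Phi> v (j, y)" unfolding Fcheck_def by blast
  moreover have "(j, y) \<in> Scar \<Phi>" using j y by simp
  ultimately have "R (i, x) (j, y)"
    using S_arrow_Seq_cong[OF R ix ix v(1) _ Seq_refl[OF ix] y(2) v(2)] by blast
  then show ?thesis using y by blast
qed

context
  fixes i j R f
  assumes i: "i \<in> Ic \<Phi>" and j: "j \<in> Ic \<Phi>" and R: "S_arrow \<Phi> i j R"
    and f: "\<And>x. x \<in> Fc \<Phi> i \<Longrightarrow> f x \<in> Fc \<Phi> j \<and> R (i, x) (j, f x)"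
begin

lemma fibre_map_of_S_arrow_values: "fibre_map i j f"
  unfolding ext_fun_def
proof (intro conjI ballI impI)
  fix x x' assume x: "x \<in> Fc \<Phi> i" "x' \<in> Fc \<Phi> i" "Feq \<Phi> i x x'"
  have ix: "(i, x) \<in> Scar \<Phi>" "(i, x') \<in> Scar \<Phi>"
    and fx: "(j, f x) \<in> Scar \<Phi>" "(j, f x') \<in> Scar \<Phi>"
    using i j x f by auto
  have "R (i, x') (j, f x)"
    using S_arrow_Seq_cong[OF R ix fx(1) fx(1) _ Seq_refl[OF fx(1)]] f Seq_fibre_iff i x by simp
  then have "Seq \<Phi> (j, f x) (j, f x')"
    using S_arrow_Seq_unique[OF R ix(2) fx] f[OF x(2)] by blast
  then show "Feq \<Phi> j (f x) (f x')" using Seq_fibre_iff j x f by simp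
qed (use f in blast)

lemma graph_of_S_arrow_values: "same_ext \<Phi> (graph \<Phi> i j f) R"
  unfolding same_ext_def
proof (intro ballI iffI)
  fix u v assume uv: "u \<in> Scar \<Phi>" "v \<in> Scar \<Phi>"
  {
    assume "graph \<Phi> i j f u v"
    then obtain x where x: "x \<in> Fc \<Phi> i" "Seq \<Phi> u (i, x)" "Seq \<Phi> v (j, f x)"
      unfolding graph_def by blast
    have ix: "(i, x) \<in> Scar \<Phi>" and fx: "(j, f x) \<in> Scar \<Phi>" using i j x f by auto
    show "R u v"
      using S_arrow_Seq_cong[OF R ix uv(1) fx uv(2) Seq_sym[OF uv(1) ix x(2)] Seq_sym[OF uv(2) fx x(3)]]
        f x(1) by blast
  }
  assume r: "R u v"
  then have "u \<in> Fcheck \<Phi> i" using R uv unfolding S_arrow_def rel_dom_def by blast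
  then obtain x where x: "x \<in> Fc \<Phi> i" "Seq \<Phi> u (i, x)" unfolding Fcheck_def by blast
  then have "R (i, x) v"
    using S_arrow_Seq_cong[OF R uv(1) _ uv(2) uv(2) _ Seq_refl[OF uv(2)] r] i by simp
  moreover have "(i, x) \<in> Scar \<Phi>" "(j, f x) \<in> Scar \<Phi>" using i j x f by auto
  ultimately have "Seq \<Phi> v (j, f x)" using S_arrow_Seq_unique[OF R] f[OF x(1)] uv by blast
  then show "graph \<Phi> i j f u v" using x unfolding graph_def by blast
qed

end

lemma S_arrow_graph:
  assumes "i \<in> Ic \<Phi>" "j \<in> Ic \<Phi>" "S_arrow \<Phi> i j R"
  shows "\<exists>f. fibre_map i j f \<and> same_ext \<Phi> (graph \<Phi> i j f) R"
proof -
  have "\<forall>x\<in>Fc \<Phi> i. \<exists>y. y \<in> Fc \<Phi> j \<and> R (i, x) (j, y)"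
    using S_arrow_total[OF assms] by blast
  then obtain f where "\<forall>x\<in>Fc \<Phi> i. f x \<in> Fc \<Phi> j \<and> R (i, x) (j, f x)"
    by (auto dest: bchoice)
  then show ?thesis
    using fibre_map_of_S_arrow_values graph_of_S_arrow_values assms by blast
qed

lemma fibre_map_eq_if_same_graph:
  assumes "i \<in> Ic \<Phi>" "j \<in> Ic \<Phi>" "fibre_map i j f" "fibre_map i j g"
    and "same_ext \<Phi> (graph \<Phi> i j f) (graph \<Phi> i j g)"
  shows "ext_eq (Fc \<Phi> i) (Feq \<Phi> j) f g"
  unfolding ext_eq_def
proof
  fix x assume x: "x \<in> Fc \<Phi> i"
  then have "Seq \<Phi> (j, f x) (j, g x)"
    using graph_same_ext_iff[OF assms(1-3) assms(1,2,4) Ieq_refl] assms Seq_refl by simp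
  then show "Feq \<Phi> j (f x) (g x)"
    using Seq_fibre_iff ext_fun_in assms x by metis
qed

lemma N_fun_graph:
  assumes "i \<in> Ic \<Phi>" "j \<in> Ic \<Phi>" "S_arrow \<Phi> i j R"
  shows "fibre_map i j (N_fun \<Phi> i j R)" "same_ext \<Phi> (graph \<Phi> i j (N_fun \<Phi> i j R)) R"
  using someI_ex[OF S_arrow_graph[OF assms]] unfolding N_fun_def by blast+

lemma catC_ArEq_iff:
  assumes i: "i \<in> Ic \<Phi>" and j: "j \<in> Ic \<Phi>" and f: "fibre_map i j f"
    and i': "i' \<in> Ic \<Phi>" and j': "j' \<in> Ic \<Phi>" and f': "fibre_map i' j' f'"
  shows "ArEq (catC \<Phi>) (i, j, f) (i', j', f') \<longleftrightarrow> Ieq \<Phi> i i' \<and> Ieq \<Phi> j j' \<and>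
    (\<forall>x\<in>Fc \<Phi> i. \<forall>x'\<in>Fc \<Phi> i'. Seq \<Phi> (i, x) (i', x') \<longrightarrow> Seq \<Phi> (j, f x) (j', f' x'))"
    (is "_ \<longleftrightarrow> _ \<and> _ \<and> ?graphs_agree")
proof
  assume "ArEq (catC \<Phi>) (i, j, f) (i', j', f')"
  then obtain p q where p: "p \<in> Ip \<Phi> i i'" and q: "q \<in> Ip \<Phi> j j'"
    and pq: "\<forall>x\<in>Fc \<Phi> i. Feq \<Phi> j' (Ftr \<Phi> q (f x)) (f' (Ftr \<Phi> p x))"
    by (auto simp: catC_simps)
  have ?graphs_agree
  proof (intro ballI impI)
    fix x x' assume x: "x \<in> Fc \<Phi> i" "x' \<in> Fc \<Phi> i'" "Seq \<Phi> (i, x) (i', x')"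
    have fx: "f x \<in> Fc \<Phi> j" using ext_fun_in[OF f x(1)] .
    have px: "Ftr \<Phi> p x \<in> Fc \<Phi> i'" using Ftr_in[OF i i' p x(1)] .
    have "Feq \<Phi> j' (f' (Ftr \<Phi> p x)) (f' x')"
      using ext_fun_cong[OF f' px x(2) Seq_any_proof[OF x(3) p i i' x(1,2)]] .
    then have "Feq \<Phi> j' (Ftr \<Phi> q (f x)) (f' x')"
      using Feq_trans[OF j' _ _ _ pq[rule_format, OF x(1)]] Ftr_in[OF j j' q fx]
        ext_fun_in[OF f'] px x(2) by blast
    then have "Seq \<Phi> (j', Ftr \<Phi> q (f x)) (j', f' x')"
      using Seq_fibre_iff j' Ftr_in[OF j j' q fx] ext_fun_in[OF f' x(2)] by blast
    then show "Seq \<Phi> (j, f x) (j', f' x')"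
      using Seq_trans[OF _ _ _ Seq_Ftr[OF j j' q fx]] j j' fx Ftr_in[OF j j' q fx]
        ext_fun_in[OF f' x(2)] by simp
  qed
  then show "Ieq \<Phi> i i' \<and> Ieq \<Phi> j j' \<and> ?graphs_agree" using p q unfolding Ieq_def by blast
next
  assume "Ieq \<Phi> i i' \<and> Ieq \<Phi> j j' \<and> ?graphs_agree"
  then obtain p q where p: "p \<in> Ip \<Phi> i i'" and q: "q \<in> Ip \<Phi> j j'" and H: ?graphs_agree
    unfolding Ieq_def by blast
  have "Feq \<Phi> j' (Ftr \<Phi> q (f x)) (f' (Ftr \<Phi> p x))" if x: "x \<in> Fc \<Phi> i" for x
    using H Seq_Ftr[OF i i' p x] Ftr_in[OF i i' p x] Seq_any_proof[OF _ q j j']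
      ext_fun_in[OF f x] ext_fun_in[OF f' Ftr_in[OF i i' p x]] x by blast
  then show "ArEq (catC \<Phi>) (i, j, f) (i', j', f')" using p q by (auto simp: catC_simps)
qed

lemma M_arr_ArEq_iff:
  assumes "(i, j, f) \<in> Ar (catC \<Phi>)" "(i', j', f') \<in> Ar (catC \<Phi>)"
  shows "ArEq (catC \<Phi>) (i, j, f) (i', j', f') \<longleftrightarrow>
    ArEq (catS \<Phi>) (M_arr \<Phi> (i, j, f)) (M_arr \<Phi> (i', j', f'))"
  using assms catC_ArEq_iff graph_same_ext_iff by (auto simp: catC_simps catS_simps M_arr_def)

lemma M_arr_functor: "is_functor (catC \<Phi>) (catS \<Phi>) id (M_arr \<Phi>)"
  unfolding is_functor_def Ball_def split_paired_All
proof (intro conjI allI impI)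
  fix i j f i' j' f'
  assume a: "(i, j, f) \<in> Ar (catC \<Phi>)" and b: "(i', j', f') \<in> Ar (catC \<Phi>)"
  then show "ArEq (catC \<Phi>) (i, j, f) (i', j', f') \<Longrightarrow>
      ArEq (catS \<Phi>) (M_arr \<Phi> (i, j, f)) (M_arr \<Phi> (i', j', f'))"
    using M_arr_ArEq_iff by blast
  assume "ObEq (catC \<Phi>) (Cod (catC \<Phi>) (i, j, f)) (Dom (catC \<Phi>) (i', j', f'))"
  then have "(SOME p. p \<in> Ip \<Phi> j i') \<in> Ip \<Phi> j i'"
    by (simp add: catC_simps Ieq_def some_in_eq)
  then show "ArEq (catS \<Phi>) (M_arr \<Phi> (Comp (catC \<Phi>) (i', j', f') (i, j, f)))
      (Comp (catS \<Phi>) (M_arr \<Phi> (i', j', f')) (M_arr \<Phi> (i, j, f)))"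
    using a b graph_comp Ieq_refl by (simp add: M_arr_def catC_simps catS_simps)
qed (auto simp: M_arr_def catC_simps catS_simps graph_S_arrow graph_id Ieq_refl)

lemma S_arrow_id_rel: "i \<in> Ic \<Phi> \<Longrightarrow> S_arrow \<Phi> i i (id_rel \<Phi> i)"
  using S_arrow_same_ext graph_S_arrow ext_fun_id graph_id by metis

lemma graph_N_fun_comp:
  assumes "i \<in> Ic \<Phi>" "j \<in> Ic \<Phi>" "j' \<in> Ic \<Phi>" "k \<in> Ic \<Phi>"
    and "S_arrow \<Phi> i j R" "S_arrow \<Phi> j' k Q" "p \<in> Ip \<Phi> j j'"
  shows "same_ext \<Phi> (graph \<Phi> i k (N_fun \<Phi> j' k Q \<circ> Ftr \<Phi> p \<circ> N_fun \<Phi> i j R)) (rel_comp \<Phi> Q R)"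
  using same_ext_trans[OF graph_comp rel_comp_same_ext] N_fun_graph assms by metis

lemma S_arrow_rel_comp:
  assumes "i \<in> Ic \<Phi>" "j \<in> Ic \<Phi>" "j' \<in> Ic \<Phi>" "k \<in> Ic \<Phi>"
    and "S_arrow \<Phi> i j R" "S_arrow \<Phi> j' k Q" "Ieq \<Phi> j j'"
  shows "S_arrow \<Phi> i k (rel_comp \<Phi> Q R)"
proof -
  obtain p where p: "p \<in> Ip \<Phi> j j'" using assms(7) unfolding Ieq_def by blast
  have "fibre_map i k (N_fun \<Phi> j' k Q \<circ> Ftr \<Phi> p \<circ> N_fun \<Phi> i j R)"
    using ext_fun_comp ext_fun_Ftr N_fun_graph(1) p assms by metis
  then show ?thesis
    using S_arrow_same_ext[OF graph_S_arrow graph_N_fun_comp[OF assms(1-6) p]] assms by blast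
qed

lemma N_fun_ArEq:
  assumes i: "i \<in> Ic \<Phi>" and j: "j \<in> Ic \<Phi>" and R: "S_arrow \<Phi> i j R" and f: "fibre_map i j f"
    and Rf: "same_ext \<Phi> R (graph \<Phi> i j f)"
  shows "ArEq (catC \<Phi>) (i, j, N_fun \<Phi> i j R) (i, j, f)"
proof -
  have "(i, j, N_fun \<Phi> i j R) \<in> Ar (catC \<Phi>)" "(i, j, f) \<in> Ar (catC \<Phi>)"
    using N_fun_graph(1)[OF i j R] i j f by (auto simp: catC_simps)
  then show ?thesis
    using M_arr_ArEq_iff same_ext_trans[OF N_fun_graph(2)[OF i j R] Rf] Ieq_refl i j
    by (simp add: M_arr_def catS_simps)
qed

lemma N_arr_ArEq:
  assumes a: "(i, j, R) \<in> Ar (catS \<Phi>)" and b: "(i', j', R') \<in> Ar (catS \<Phi>)"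
    and ab: "ArEq (catS \<Phi>) (i, j, R) (i', j', R')"
  shows "ArEq (catC \<Phi>) (N_arr \<Phi> (i, j, R)) (N_arr \<Phi> (i', j', R'))"
proof -
  have ar: "i \<in> Ic \<Phi>" "j \<in> Ic \<Phi>" "S_arrow \<Phi> i j R" "i' \<in> Ic \<Phi>" "j' \<in> Ic \<Phi>" "S_arrow \<Phi> i' j' R'"
    using a b by (auto simp: catS_simps)
  have NR: "(i, j, N_fun \<Phi> i j R) \<in> Ar (catC \<Phi>)" "(i', j', N_fun \<Phi> i' j' R') \<in> Ar (catC \<Phi>)"
    using ar N_fun_graph(1) by (auto simp: catC_simps)
  have "same_ext \<Phi> (graph \<Phi> i j (N_fun \<Phi> i j R)) (graph \<Phi> i' j' (N_fun \<Phi> i' j' R'))"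
    using ab same_ext_trans[OF N_fun_graph(2)[OF ar(1-3)]
        same_ext_trans[OF _ same_ext_sym[OF N_fun_graph(2)[OF ar(4-6)]]]]
    by (simp add: catS_simps)
  then show ?thesis
    using M_arr_ArEq_iff[OF NR] ab by (simp add: N_arr_def M_arr_def catS_simps)
qed

lemma N_arr_Comp:
  assumes a: "(i, j, R) \<in> Ar (catS \<Phi>)" and b: "(i', j', R') \<in> Ar (catS \<Phi>)"
    and jj: "Ieq \<Phi> j i'"
  shows "ArEq (catC \<Phi>) (N_arr \<Phi> (Comp (catS \<Phi>) (i', j', R') (i, j, R)))
    (Comp (catC \<Phi>) (N_arr \<Phi> (i', j', R')) (N_arr \<Phi> (i, j, R)))"
proof -
  have ar: "i \<in> Ic \<Phi>" "j \<in> Ic \<Phi>" "S_arrow \<Phi> i j R" "i' \<in> Ic \<Phi>" "j' \<in> Ic \<Phi>" "S_arrow \<Phi> i' j' R'"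
    using a b by (auto simp: catS_simps)
  have p: "(SOME p. p \<in> Ip \<Phi> j i') \<in> Ip \<Phi> j i'" using jj by (simp add: Ieq_def some_in_eq)
  have "ArEq (catC \<Phi>) (i, j', N_fun \<Phi> i j' (rel_comp \<Phi> R' R))
      (i, j', N_fun \<Phi> i' j' R' \<circ> Ftr \<Phi> (SOME p. p \<in> Ip \<Phi> j i') \<circ> N_fun \<Phi> i j R)"
    using N_fun_ArEq[OF ar(1,5) S_arrow_rel_comp[OF ar(1,2,4,5) ar(3,6) jj]
        ext_fun_comp[OF N_fun_graph(1)[OF ar(1-3)]
          ext_fun_comp[OF ext_fun_Ftr[OF ar(2,4) p] N_fun_graph(1)[OF ar(4-6)]]]
        same_ext_sym[OF graph_N_fun_comp[OF ar(1,2,4,5) ar(3,6) p]]] .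
  then show ?thesis by (simp add: N_arr_def catS_simps catC_simps)
qed

lemma N_arr_functor: "is_functor (catS \<Phi>) (catC \<Phi>) id (N_arr \<Phi>)"
  unfolding is_functor_def Ball_def split_paired_All
proof (intro conjI allI impI)
  fix i assume "i \<in> Ob (catS \<Phi>)"
  then have i: "i \<in> Ic \<Phi>" by (simp add: catS_simps)
  show "ArEq (catC \<Phi>) (N_arr \<Phi> (Idt (catS \<Phi>) i)) (Idt (catC \<Phi>) (id i))"
    using N_fun_ArEq[OF i i S_arrow_id_rel[OF i] ext_fun_id same_ext_sym[OF graph_id[OF i]]]
    by (simp add: N_arr_def catS_simps catC_simps)
next
  fix i j R i' j' R'
  assume a: "(i, j, R) \<in> Ar (catS \<Phi>)" and b: "(i', j', R') \<in> Ar (catS \<Phi>)"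
  then show "ArEq (catS \<Phi>) (i, j, R) (i', j', R') \<Longrightarrow>
      ArEq (catC \<Phi>) (N_arr \<Phi> (i, j, R)) (N_arr \<Phi> (i', j', R'))"
    by (rule N_arr_ArEq)
  show "ObEq (catS \<Phi>) (Cod (catS \<Phi>) (i, j, R)) (Dom (catS \<Phi>) (i', j', R')) \<Longrightarrow>
      ArEq (catC \<Phi>) (N_arr \<Phi> (Comp (catS \<Phi>) (i', j', R') (i, j, R)))
        (Comp (catC \<Phi>) (N_arr \<Phi> (i', j', R')) (N_arr \<Phi> (i, j, R)))"
    using N_arr_Comp[OF a b] by (simp add: catS_simps)
qed (auto simp: N_arr_def catC_simps catS_simps N_fun_graph Ieq_refl)

lemma M_arr_N_arr_identity: "is_identity_functor (catS \<Phi>) (id \<circ> id) (M_arr \<Phi> \<circ> N_arr \<Phi>)"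
  unfolding is_identity_functor_def Ball_def split_paired_All
  by (auto simp: M_arr_def N_arr_def catS_simps Ieq_refl N_fun_graph)

lemma N_arr_M_arr_identity: "is_identity_functor (catC \<Phi>) (id \<circ> id) (N_arr \<Phi> \<circ> M_arr \<Phi>)"
  unfolding is_identity_functor_def Ball_def split_paired_All
proof (intro conjI allI impI)
  fix i j f assume "(i, j, f) \<in> Ar (catC \<Phi>)"
  then have "i \<in> Ic \<Phi>" "j \<in> Ic \<Phi>" "fibre_map i j f" by (simp_all add: catC_simps)
  then show "ArEq (catC \<Phi>) ((N_arr \<Phi> \<circ> M_arr \<Phi>) (i, j, f)) (i, j, f)"
    using N_fun_ArEq[OF _ _ graph_S_arrow _ same_ext_refl] by (simp add: M_arr_def N_arr_def)
qed (simp add: catC_simps Ieq_refl)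

lemma S_arrow_ex1_graph:
  assumes "i \<in> Ic \<Phi>" "j \<in> Ic \<Phi>" "S_arrow \<Phi> i j R"
  shows "\<exists>f. fibre_map i j f \<and> same_ext \<Phi> (graph \<Phi> i j f) R \<and>
    (\<forall>g. fibre_map i j g \<and> same_ext \<Phi> (graph \<Phi> i j g) R \<longrightarrow> ext_eq (Fc \<Phi> i) (Feq \<Phi> j) f g)"
proof -
  obtain f where f: "fibre_map i j f" "same_ext \<Phi> (graph \<Phi> i j f) R"
    using S_arrow_graph[OF assms] by blast
  have "ext_eq (Fc \<Phi> i) (Feq \<Phi> j) f g"
    if "fibre_map i j g" "same_ext \<Phi> (graph \<Phi> i j g) R" for g
    using fibre_map_eq_if_same_graph[OF assms(1,2) f(1) that(1)]
      same_ext_trans[OF f(2) same_ext_sym[OF that(2)]] .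
  then show ?thesis using f by blast
qed

end

theorem mainTheorem7:
  fixes \<Phi> :: "('i, 'p, 'a) family"
  assumes "pi_family \<Phi>"
  shows "is_functor (catC \<Phi>) (catS \<Phi>) id (M_arr \<Phi>)
       \<and> (\<forall>i\<in>Ic \<Phi>. \<forall>j\<in>Ic \<Phi>. \<forall>R. S_arrow \<Phi> i j R \<longrightarrow>
            (\<exists>f. ext_fun (Fc \<Phi> i) (Feq \<Phi> i) (Fc \<Phi> j) (Feq \<Phi> j) f \<and>
                 same_ext \<Phi> (graph \<Phi> i j f) R \<and>
                 (\<forall>g. ext_fun (Fc \<Phi> i) (Feq \<Phi> i) (Fc \<Phi> j) (Feq \<Phi> j) g \<and>
                      same_ext \<Phi> (graph \<Phi> i j g) R \<longrightarrow> ext_eq (Fc \<Phi> i) (Feq \<Phi> j) f g)))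
       \<and> is_functor (catS \<Phi>) (catC \<Phi>) id (N_arr \<Phi>)
       \<and> is_identity_functor (catS \<Phi>) (id \<circ> id) (M_arr \<Phi> \<circ> N_arr \<Phi>)
       \<and> is_identity_functor (catC \<Phi>) (id \<circ> id) (N_arr \<Phi> \<circ> M_arr \<Phi>)"
proof -
  interpret proof_irrelevant_family \<Phi> by (rule proof_irrelevant_family.intro) fact
  show ?thesis
    using M_arr_functor S_arrow_ex1_graph N_arr_functor M_arr_N_arr_identity N_arr_M_arr_identity
    by blast
qed

end
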